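(* Let $\widetilde C$ be an $\mathcal S$-complex over $R$. Then $H_\ast(\Sigma\widetilde C)\cong H_\ast(\widetilde C)$, where $H_\ast$ denotes the homology of the underlying chain complex.
   Context: Let $R$ be a commutative ring; graded modules are $\mathbb Z$-graded, $V[i]_j=V_{i+j}$, differentials have degree $-1$. An $\mathcal S$-complex over $R$ is a chain complex $(\widetilde C,\widetilde d)$ of finitely generated free graded $R$-modules with a graded decomposition $\widetilde C=C\oplus C[-1]\oplus\mathsf R$ in which $\widetilde d=\begin{pmatrix} d&0&0\\ v&-d&\delta_2\\ \delta_1&0&r\end{pmatrix}$. The suspension $\Sigma\widetilde C$ is the chain complex $C_\Sigma\oplus C_\Sigma[-1]\oplus\mathsf R$ with $C_\Sigma=C[-2]\oplus\mathsf R[-1]$ and differential, with respect to the ordered summands $C[-2],\mathsf R[-1],C[-3],\mathsf R[-2],\mathsf R$, $\begin{pmatrix} d&-\delta_2&0&0&0\\ 0&-r&0&0&0\\ v&0&-d&\delta_2&v\delta_2\\ \delta_1&0&0&r&\delta_1\delta_2\\ 0&1&0&0&r\end{pmatrix}$ (the entry $1$ is the identity $\mathsf R[-1]\to\mathsf R$). *)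

theory Defs
  imports Main "HOL-Library.Function_Algebras" "HOL-Library.Product_Plus"
begin

text \<open>Finitely generated free graded R-modules are given by a rank function
  n :: int => nat (finite support); the degree-j part is R^(n j), represented
  by coordinate vectors nat => R vanishing from index n j on.\<close>

type_synonym 'a vec = "nat \<Rightarrow> 'a"

definition fvec :: "(int \<Rightarrow> nat) \<Rightarrow> int \<Rightarrow> ('a::zero) vec set" where
  "fvec n j = {x. \<forall>i\<ge>n j. x i = 0}"

definition fg_free_graded :: "(int \<Rightarrow> nat) \<Rightarrow> bool" where
  "fg_free_graded n \<longleftrightarrow> finite {j. n j \<noteq> 0}"

definition vsmult :: "'a::times \<Rightarrow> 'a vec \<Rightarrow> 'a vec" where
  "vsmult c x = (\<lambda>i. c * x i)"

definition graded_map ::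
  "(int \<Rightarrow> nat) \<Rightarrow> (int \<Rightarrow> nat) \<Rightarrow> int \<Rightarrow> (int \<Rightarrow> ('a::comm_ring_1) vec \<Rightarrow> 'a vec) \<Rightarrow> bool" where
  "graded_map n m k f \<longleftrightarrow>
     (\<forall>j. \<forall>x\<in>fvec n j. f j x \<in> fvec m (j + k)) \<and>
     (\<forall>j. \<forall>x\<in>fvec n j. \<forall>y\<in>fvec n j. f j (x + y) = f j x + f j y) \<and>
     (\<forall>j c. \<forall>x\<in>fvec n j. f j (vsmult c x) = vsmult c (f j x))"

definition is_chain_complex :: "(int \<Rightarrow> 'm set) \<Rightarrow> (int \<Rightarrow> 'm \<Rightarrow> 'm::ab_group_add) \<Rightarrow> bool" where
  "is_chain_complex M D \<longleftrightarrow>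
     (\<forall>j. \<forall>x\<in>M j. D j x \<in> M (j - 1)) \<and> (\<forall>j. \<forall>x\<in>M j. D (j - 1) (D j x) = 0)"

definition cycles :: "(int \<Rightarrow> 'm set) \<Rightarrow> (int \<Rightarrow> 'm \<Rightarrow> 'm::ab_group_add) \<Rightarrow> int \<Rightarrow> 'm set" where
  "cycles M D j = {x \<in> M j. D j x = 0}"

definition boundaries :: "(int \<Rightarrow> 'm set) \<Rightarrow> (int \<Rightarrow> 'm \<Rightarrow> 'm::ab_group_add) \<Rightarrow> int \<Rightarrow> 'm set" where
  "boundaries M D j = D (j + 1) ` M (j + 1)"

text \<open>H_j(M) = cycles/boundaries is isomorphic as R-module to H_k(N): there is an
  R-linear map on cycles, sending cycles to cycles and boundaries to boundaries,
  whose induced map on the quotients is surjective and injective.\<close>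
definition homology_iso ::
  "(int \<Rightarrow> 'm set) \<Rightarrow> (int \<Rightarrow> 'm \<Rightarrow> 'm::ab_group_add) \<Rightarrow> ('a \<Rightarrow> 'm \<Rightarrow> 'm) \<Rightarrow> int \<Rightarrow>
   (int \<Rightarrow> 'n set) \<Rightarrow> (int \<Rightarrow> 'n \<Rightarrow> 'n::ab_group_add) \<Rightarrow> ('a \<Rightarrow> 'n \<Rightarrow> 'n) \<Rightarrow> int \<Rightarrow> bool" where
  "homology_iso M D S j N E T k \<longleftrightarrow>
     (\<exists>f :: 'm \<Rightarrow> 'n.
        (\<forall>x\<in>cycles M D j. \<forall>y\<in>cycles M D j. f (x + y) = f x + f y) \<and>
        (\<forall>c. \<forall>x\<in>cycles M D j. f (S c x) = T c (f x)) \<and>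
        f ` cycles M D j \<subseteq> cycles N E k \<and>
        f ` boundaries M D j \<subseteq> boundaries N E k \<and>
        (\<forall>z'\<in>cycles N E k. \<exists>z\<in>cycles M D j. f z - z' \<in> boundaries N E k) \<and>
        (\<forall>z\<in>cycles M D j. f z \<in> boundaries N E k \<longrightarrow> z \<in> boundaries M D j))"

text \<open>The S-complex C~ = C (+) C[-1] (+) R~, with C[-1]_j = C_(j-1); elements (x,y,z).
  Blocks: d : C_j -> C_(j-1), v : C_j -> C_(j-2), delta1 : C_j -> R~_(j-1),
  delta2 : R~_j -> C_(j-2), r : R~_j -> R~_(j-1).\<close>

definition St_carrier :: "(int \<Rightarrow> nat) \<Rightarrow> (int \<Rightarrow> nat) \<Rightarrow> int \<Rightarrow> (('a::zero) vec \<times> 'a vec \<times> 'a vec) set" where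
  "St_carrier nC nR j = fvec nC j \<times> fvec nC (j - 1) \<times> fvec nR j"

definition St_diff ::
  "(int \<Rightarrow> ('a::comm_ring_1) vec \<Rightarrow> 'a vec) \<Rightarrow> (int \<Rightarrow> 'a vec \<Rightarrow> 'a vec) \<Rightarrow> (int \<Rightarrow> 'a vec \<Rightarrow> 'a vec) \<Rightarrow>
   (int \<Rightarrow> 'a vec \<Rightarrow> 'a vec) \<Rightarrow> (int \<Rightarrow> 'a vec \<Rightarrow> 'a vec) \<Rightarrow> int \<Rightarrow>
   ('a vec \<times> 'a vec \<times> 'a vec) \<Rightarrow> ('a vec \<times> 'a vec \<times> 'a vec)" where
  "St_diff d v delta1 delta2 r j = (\<lambda>(x, y, z).
     (d j x, v j x - d (j - 1) y + delta2 j z, delta1 j x + r j z))"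

definition St_smult :: "'a::comm_ring_1 \<Rightarrow> ('a vec \<times> 'a vec \<times> 'a vec) \<Rightarrow> ('a vec \<times> 'a vec \<times> 'a vec)" where
  "St_smult c = (\<lambda>(x, y, z). (vsmult c x, vsmult c y, vsmult c z))"

definition S_complex ::
  "(int \<Rightarrow> nat) \<Rightarrow> (int \<Rightarrow> nat) \<Rightarrow>
   (int \<Rightarrow> ('a::comm_ring_1) vec \<Rightarrow> 'a vec) \<Rightarrow> (int \<Rightarrow> 'a vec \<Rightarrow> 'a vec) \<Rightarrow> (int \<Rightarrow> 'a vec \<Rightarrow> 'a vec) \<Rightarrow>
   (int \<Rightarrow> 'a vec \<Rightarrow> 'a vec) \<Rightarrow> (int \<Rightarrow> 'a vec \<Rightarrow> 'a vec) \<Rightarrow> bool" where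
  "S_complex nC nR d v delta1 delta2 r \<longleftrightarrow>
     fg_free_graded nC \<and> fg_free_graded nR \<and>
     graded_map nC nC (-1) d \<and> graded_map nC nC (-2) v \<and>
     graded_map nC nR (-1) delta1 \<and> graded_map nR nC (-2) delta2 \<and>
     graded_map nR nR (-1) r \<and>
     is_chain_complex (St_carrier nC nR) (St_diff d v delta1 delta2 r)"

text \<open>The suspension: C_Sigma = C[-2] (+) R~[-1], Sigma C~ = C_Sigma (+) C_Sigma[-1] (+) R~.
  Elements ((a,b),(c,e),z) with a in C_(j-2), b in R~_(j-1), c in C_(j-3), e in R~_(j-2),
  z in R~_j.\<close>

definition Sigma_carrier :: "(int \<Rightarrow> nat) \<Rightarrow> (int \<Rightarrow> nat) \<Rightarrow> int \<Rightarrow>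
   ((('a::zero) vec \<times> 'a vec) \<times> ('a vec \<times> 'a vec) \<times> 'a vec) set" where
  "Sigma_carrier nC nR j =
     (fvec nC (j - 2) \<times> fvec nR (j - 1)) \<times> (fvec nC (j - 3) \<times> fvec nR (j - 2)) \<times> fvec nR j"

definition Sigma_diff ::
  "(int \<Rightarrow> ('a::comm_ring_1) vec \<Rightarrow> 'a vec) \<Rightarrow> (int \<Rightarrow> 'a vec \<Rightarrow> 'a vec) \<Rightarrow> (int \<Rightarrow> 'a vec \<Rightarrow> 'a vec) \<Rightarrow>
   (int \<Rightarrow> 'a vec \<Rightarrow> 'a vec) \<Rightarrow> (int \<Rightarrow> 'a vec \<Rightarrow> 'a vec) \<Rightarrow> int \<Rightarrow>
   (('a vec \<times> 'a vec) \<times> ('a vec \<times> 'a vec) \<times> 'a vec) \<Rightarrow> (('a vec \<times> 'a vec) \<times> ('a vec \<times> 'a vec) \<times> 'a vec)" where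
  "Sigma_diff d v delta1 delta2 r j = (\<lambda>((a, b), (c, e), z).
     ((d (j - 2) a - delta2 (j - 1) b, - r (j - 1) b),
      (v (j - 2) a - d (j - 3) c + delta2 (j - 2) e + v (j - 2) (delta2 j z),
       delta1 (j - 2) a + r (j - 2) e + delta1 (j - 2) (delta2 j z)),
      b + r j z))"

definition Sigma_smult :: "'a::comm_ring_1 \<Rightarrow> (('a vec \<times> 'a vec) \<times> ('a vec \<times> 'a vec) \<times> 'a vec) \<Rightarrow>
   (('a vec \<times> 'a vec) \<times> ('a vec \<times> 'a vec) \<times> 'a vec)" where
  "Sigma_smult c = (\<lambda>((a, b), (e1, e2), z).
     ((vsmult c a, vsmult c b), (vsmult c e1, vsmult c e2), vsmult c z))"

end

theory Submission
  imports Defs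
begin

text \<open>The map \<open>((a, b), (c, e), z) \<mapsto> (a + \<delta>\<^sub>2 z, c, e)\<close> from \<open>\<Sigma>C~\<close> to \<open>C~\<close> (lowering degrees
  by 2) is a chain map because \<open>d \<delta>\<^sub>2 = \<delta>\<^sub>2 r\<close>, which is one entry of \<open>d~\<^sup>2 = 0\<close>. It is split by
  the inclusion \<open>(x, y, w) \<mapsto> ((x, 0), (y, w), 0)\<close>, and the composite in the other order is
  chain homotopic to the identity via \<open>((a, b), (c, e), z) \<mapsto> ((0, z), (0, 0), 0)\<close>. So the
  projection is a deformation retraction and induces isomorphisms on homology.\<close>

definition chain_map ::
  "int \<Rightarrow> (int \<Rightarrow> 'm set) \<Rightarrow> (int \<Rightarrow> 'm \<Rightarrow> 'm::ab_group_add) \<Rightarrow>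
   (int \<Rightarrow> 'n set) \<Rightarrow> (int \<Rightarrow> 'n \<Rightarrow> 'n::ab_group_add) \<Rightarrow> (int \<Rightarrow> 'm \<Rightarrow> 'n) \<Rightarrow> bool" where
  "chain_map s M D N E f \<longleftrightarrow>
     (\<forall>i. \<forall>x\<in>M i. f i x \<in> N (i + s) \<and> f (i - 1) (D i x) = E (i + s) (f i x))"

definition chain_homotopy ::
  "(int \<Rightarrow> 'm set) \<Rightarrow> (int \<Rightarrow> 'm \<Rightarrow> 'm::ab_group_add) \<Rightarrow>
   (int \<Rightarrow> 'n set) \<Rightarrow> (int \<Rightarrow> 'n \<Rightarrow> 'n::ab_group_add) \<Rightarrow>
   (int \<Rightarrow> 'm \<Rightarrow> 'n) \<Rightarrow> (int \<Rightarrow> 'm \<Rightarrow> 'n) \<Rightarrow> (int \<Rightarrow> 'm \<Rightarrow> 'n) \<Rightarrow> bool" where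
  "chain_homotopy M D N E f f' h \<longleftrightarrow>
     (\<forall>i. \<forall>x\<in>M i. h i x \<in> N (i + 1) \<and> f i x - f' i x = E (i + 1) (h i x) + h (i - 1) (D i x))"

lemma chain_map_cycles:
  assumes "chain_map s M D N E f" and "f (j - 1) 0 = 0"
  shows "f j ` cycles M D j \<subseteq> cycles N E (j + s)"
proof
  fix y assume "y \<in> f j ` cycles M D j"
  then obtain x where x: "x \<in> M j" "D j x = 0" and y: "y = f j x"
    by (auto simp: cycles_def)
  with assms have "f j x \<in> N (j + s)" and "E (j + s) (f j x) = 0"
    unfolding chain_map_def by metis+
  with y show "y \<in> cycles N E (j + s)"
    by (simp add: cycles_def)
qed

lemma chain_map_boundaries:
  assumes "chain_map s M D N E f"
  shows "f j ` boundaries M D j \<subseteq> boundaries N E (j + s)"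
proof
  fix y assume "y \<in> f j ` boundaries M D j"
  then obtain x where x: "x \<in> M (j + 1)" and y: "y = f j (D (j + 1) x)"
    by (auto simp: boundaries_def)
  with assms have "y = E (j + 1 + s) (f (j + 1) x)" and "f (j + 1) x \<in> N (j + 1 + s)"
    unfolding chain_map_def by (metis add_diff_cancel_right')+
  then show "y \<in> boundaries N E (j + s)"
    by (simp add: boundaries_def ac_simps)
qed

lemma chain_homotopy_cycles:
  assumes "chain_homotopy M D N E f f' h" and "h (j - 1) 0 = 0" and "z \<in> cycles M D j"
  shows "f j z - f' j z \<in> boundaries N E j"
  using assms by (auto simp: chain_homotopy_def cycles_def boundaries_def)

lemma boundaries_add:
  assumes "\<And>x y. x \<in> M (j + 1) \<Longrightarrow> y \<in> M (j + 1) \<Longrightarrow> x + y \<in> M (j + 1)"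
    and "\<And>x y. x \<in> M (j + 1) \<Longrightarrow> y \<in> M (j + 1) \<Longrightarrow> D (j + 1) (x + y) = D (j + 1) x + D (j + 1) y"
    and "x \<in> boundaries M D j" and "y \<in> boundaries M D j"
  shows "x + y \<in> boundaries M D j"
proof -
  from assms(3,4) obtain x' y' where "x' \<in> M (j + 1)" "y' \<in> M (j + 1)"
    and "x = D (j + 1) x'" "y = D (j + 1) y'"
    by (auto simp: boundaries_def)
  with assms(1,2) have "x + y = D (j + 1) (x' + y')" and "x' + y' \<in> M (j + 1)"
    by simp_all
  then show ?thesis
    by (simp add: boundaries_def)
qed

lemma homology_iso_of_section:
  assumes f_add: "\<forall>x\<in>cycles M D j. \<forall>y\<in>cycles M D j. f (x + y) = f x + f y"
    and f_smult: "\<forall>c. \<forall>x\<in>cycles M D j. f (S c x) = T c (f x)"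
    and f_cycles: "f ` cycles M D j \<subseteq> cycles N E k"
    and f_boundaries: "f ` boundaries M D j \<subseteq> boundaries N E k"
    and g_cycles: "g ` cycles N E k \<subseteq> cycles M D j"
    and g_boundaries: "g ` boundaries N E k \<subseteq> boundaries M D j"
    and f_g: "\<forall>y\<in>cycles N E k. f (g y) = y"
    and zero_boundary: "0 \<in> boundaries N E k"
    and cycle_diff: "\<forall>x\<in>cycles M D j. x - g (f x) \<in> boundaries M D j"
    and boundaries_closed: "\<forall>x\<in>boundaries M D j. \<forall>y\<in>boundaries M D j. x + y \<in> boundaries M D j"
  shows "homology_iso M D S j N E T k"
  unfolding homology_iso_def
proof (intro exI[of _ f] conjI f_add f_smult f_cycles f_boundaries ballI impI)
  fix y assume "y \<in> cycles N E k"
  then show "\<exists>x\<in>cycles M D j. f x - y \<in> boundaries N E k"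
    using g_cycles f_g zero_boundary by (intro bexI[of _ "g y"]) auto
next
  fix x assume x: "x \<in> cycles M D j" and "f x \<in> boundaries N E k"
  then have "g (f x) \<in> boundaries M D j"
    using g_boundaries f_cycles f_g by blast
  with x have "(x - g (f x)) + g (f x) \<in> boundaries M D j"
    using cycle_diff boundaries_closed by blast
  then show "x \<in> boundaries M D j" by simp
qed

lemma fvec_zero [simp]: "0 \<in> fvec n j"
  by (simp add: fvec_def)

lemma fvec_add: "x \<in> fvec n j \<Longrightarrow> y \<in> fvec n j \<Longrightarrow> x + y \<in> (fvec n j :: 'a::monoid_add vec set)"
  by (simp add: fvec_def)

lemma vsmult_add: "vsmult (c::'a::comm_ring_1) (x + y) = vsmult c x + vsmult c y"
  by (simp add: vsmult_def fun_eq_iff distrib_left)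

lemma graded_map_closed: "graded_map n m k f \<Longrightarrow> x \<in> fvec n j \<Longrightarrow> f j x \<in> fvec m (j + k)"
  by (simp add: graded_map_def)

lemma graded_map_add:
  "graded_map n m k f \<Longrightarrow> x \<in> fvec n j \<Longrightarrow> y \<in> fvec n j \<Longrightarrow> f j (x + y) = f j x + f j y"
  by (simp add: graded_map_def)

lemma graded_map_smult: "graded_map n m k f \<Longrightarrow> x \<in> fvec n j \<Longrightarrow> f j (vsmult c x) = vsmult c (f j x)"
  by (simp add: graded_map_def)

lemma graded_map_zero: "graded_map n m k f \<Longrightarrow> f j 0 = 0"
  using graded_map_add[of n m k f 0 j 0] by simp

type_synonym 'a St_vec = "'a vec \<times> 'a vec \<times> 'a vec"
type_synonym 'a Sigma_vec = "('a vec \<times> 'a vec) \<times> ('a vec \<times> 'a vec) \<times> 'a vec"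

definition Sigma_proj :: "(int \<Rightarrow> 'a vec \<Rightarrow> 'a vec) \<Rightarrow> int \<Rightarrow> 'a::plus Sigma_vec \<Rightarrow> 'a St_vec" where
  "Sigma_proj delta2 j = (\<lambda>((a, b), (c, e), z). (a + delta2 j z, c, e))"

definition Sigma_incl :: "'a::zero St_vec \<Rightarrow> 'a Sigma_vec" where
  "Sigma_incl = (\<lambda>(x, y, w). ((x, 0), (y, w), 0))"

definition Sigma_homotopy :: "'a::zero Sigma_vec \<Rightarrow> 'a Sigma_vec" where
  "Sigma_homotopy = (\<lambda>((a, b), (c, e), z). ((0, z), (0, 0), 0))"

lemma Sigma_carrier_add:
  assumes "X \<in> Sigma_carrier nC nR j" and "Y \<in> Sigma_carrier nC nR j"
  shows "X + Y \<in> (Sigma_carrier nC nR j :: 'a::monoid_add Sigma_vec set)"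
  using assms by (auto simp: Sigma_carrier_def mem_Times_iff intro: fvec_add)

lemma Sigma_incl_zero [simp]: "Sigma_incl 0 = 0"
  by (simp add: Sigma_incl_def zero_prod_def)

lemma Sigma_homotopy_zero [simp]: "Sigma_homotopy 0 = 0"
  by (simp add: Sigma_homotopy_def zero_prod_def)

locale S_complex_setting =
  fixes nC nR :: "int \<Rightarrow> nat"
    and d v delta1 delta2 r :: "int \<Rightarrow> ('a::comm_ring_1) vec \<Rightarrow> 'a vec"
  assumes S_complex: "S_complex nC nR d v delta1 delta2 r"
begin

lemma graded_maps:
  "graded_map nC nC (-1) d" "graded_map nC nC (-2) v" "graded_map nC nR (-1) delta1"
  "graded_map nR nC (-2) delta2" "graded_map nR nR (-1) r"
  using S_complex by (auto simp: S_complex_def)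

lemmas graded_maps_zero [simp] = graded_maps[THEN graded_map_zero]

lemma d_delta2_commute:
  assumes z: "z \<in> fvec nR j"
  shows "d (j - 2) (delta2 j z) = delta2 (j - 1) (r j z)"
proof -
  have "(0, 0, z) \<in> St_carrier nC nR j"
    using z by (simp add: St_carrier_def)
  with S_complex have "St_diff d v delta1 delta2 r (j - 1) (St_diff d v delta1 delta2 r j (0, 0, z)) = 0"
    by (simp add: S_complex_def is_chain_complex_def)
  then have "delta2 (j - 1) (r j z) - d (j - 2) (delta2 j z) = 0"
    by (simp add: St_diff_def zero_prod_def diff_diff_eq)
  then show ?thesis by simp
qed

lemma Sigma_proj_chain_map:
  "chain_map (-2) (Sigma_carrier nC nR) (Sigma_diff d v delta1 delta2 r)
     (St_carrier nC nR) (St_diff d v delta1 delta2 r) (Sigma_proj delta2)"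
  unfolding chain_map_def
proof (intro allI ballI conjI)
  fix i and X :: "'a Sigma_vec" assume "X \<in> Sigma_carrier nC nR i"
  then obtain a b c e z where X: "X = ((a, b), (c, e), z)"
    and a: "a \<in> fvec nC (i - 2)" and b: "b \<in> fvec nR (i - 1)" and c: "c \<in> fvec nC (i - 3)"
    and e: "e \<in> fvec nR (i - 2)" and z: "z \<in> fvec nR i"
    by (cases X) (auto simp: Sigma_carrier_def)
  have delta2_z: "delta2 i z \<in> fvec nC (i - 2)"
    using graded_map_closed[OF graded_maps(4) z] by simp
  have r_z: "r i z \<in> fvec nR (i - 1)"
    using graded_map_closed[OF graded_maps(5) z] by simp
  show "Sigma_proj delta2 i X \<in> St_carrier nC nR (i + -2)"
    using fvec_add[OF a delta2_z] c e by (simp add: X Sigma_proj_def St_carrier_def)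
  show "Sigma_proj delta2 (i - 1) (Sigma_diff d v delta1 delta2 r i X) =
      St_diff d v delta1 delta2 r (i + -2) (Sigma_proj delta2 i X)"
    using d_delta2_commute[OF z] graded_map_add[OF graded_maps(4) b r_z]
      graded_maps(1-3)[THEN graded_map_add, OF a delta2_z]
    by (simp add: X Sigma_proj_def Sigma_diff_def St_diff_def algebra_simps)
qed

lemma Sigma_incl_chain_map:
  "chain_map 2 (St_carrier nC nR) (St_diff d v delta1 delta2 r)
     (Sigma_carrier nC nR) (Sigma_diff d v delta1 delta2 r) (\<lambda>_. Sigma_incl)"
  unfolding chain_map_def
proof (intro allI ballI conjI)
  fix i and Y :: "'a St_vec" assume "Y \<in> St_carrier nC nR i"
  then obtain x y w where Y: "Y = (x, y, w)"
    and "x \<in> fvec nC i" and "y \<in> fvec nC (i - 1)" and "w \<in> fvec nR i"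
    by (cases Y) (auto simp: St_carrier_def)
  then show "Sigma_incl Y \<in> Sigma_carrier nC nR (i + 2)"
    by (simp add: Sigma_incl_def Sigma_carrier_def)
  show "Sigma_incl (St_diff d v delta1 delta2 r i Y) =
      Sigma_diff d v delta1 delta2 r (i + 2) (Sigma_incl Y)"
    by (simp add: Y Sigma_incl_def Sigma_diff_def St_diff_def)
qed

lemma Sigma_proj_zero [simp]: "Sigma_proj delta2 j 0 = 0"
  by (simp add: Sigma_proj_def zero_prod_def)

lemma Sigma_proj_incl [simp]: "Sigma_proj delta2 j (Sigma_incl Y) = Y"
  by (cases Y) (simp add: Sigma_proj_def Sigma_incl_def)

lemma Sigma_homotopy_chain_homotopy:
  "chain_homotopy (Sigma_carrier nC nR) (Sigma_diff d v delta1 delta2 r)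
     (Sigma_carrier nC nR) (Sigma_diff d v delta1 delta2 r)
     (\<lambda>_ X. X) (\<lambda>i X. Sigma_incl (Sigma_proj delta2 i X)) (\<lambda>_. Sigma_homotopy)"
  unfolding chain_homotopy_def
proof (intro allI ballI conjI)
  fix i and X :: "'a Sigma_vec" assume "X \<in> Sigma_carrier nC nR i"
  then obtain a b c e z where X: "X = ((a, b), (c, e), z)" and "z \<in> fvec nR i"
    by (cases X) (auto simp: Sigma_carrier_def)
  then show "Sigma_homotopy X \<in> Sigma_carrier nC nR (i + 1)"
    by (simp add: Sigma_homotopy_def Sigma_carrier_def)
  show "X - Sigma_incl (Sigma_proj delta2 i X) =
      Sigma_diff d v delta1 delta2 r (i + 1) (Sigma_homotopy X) +
      Sigma_homotopy (Sigma_diff d v delta1 delta2 r i X)"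
    by (simp add: X Sigma_incl_def Sigma_proj_def Sigma_homotopy_def Sigma_diff_def zero_prod_def)
qed

lemma Sigma_proj_add:
  assumes "X \<in> Sigma_carrier nC nR j" and "Y \<in> Sigma_carrier nC nR j"
  shows "Sigma_proj delta2 j (X + Y) = Sigma_proj delta2 j X + Sigma_proj delta2 j Y"
  using assms graded_map_add[OF graded_maps(4)]
  by (simp add: Sigma_carrier_def Sigma_proj_def split_beta mem_Times_iff prod_eq_iff)

lemma Sigma_proj_smult:
  assumes "X \<in> Sigma_carrier nC nR j"
  shows "Sigma_proj delta2 j (Sigma_smult c X) = St_smult c (Sigma_proj delta2 j X)"
  using assms graded_map_smult[OF graded_maps(4)]
  by (simp add: Sigma_carrier_def Sigma_proj_def Sigma_smult_def St_smult_def vsmult_add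
      split_beta mem_Times_iff)

lemma Sigma_diff_add:
  assumes "X \<in> Sigma_carrier nC nR j" and "Y \<in> Sigma_carrier nC nR j"
  shows "Sigma_diff d v delta1 delta2 r j (X + Y) =
    Sigma_diff d v delta1 delta2 r j X + Sigma_diff d v delta1 delta2 r j Y"
  using assms graded_maps[THEN graded_map_add] graded_map_closed[OF graded_maps(4)]
  by (simp add: Sigma_carrier_def Sigma_diff_def fvec_add algebra_simps split_beta mem_Times_iff)

lemma zero_in_St_boundaries: "0 \<in> boundaries (St_carrier nC nR) (St_diff d v delta1 delta2 r) k"
proof -
  have "(0, 0, 0) \<in> St_carrier nC nR (k + 1)"
    by (simp add: St_carrier_def)
  moreover have "St_diff d v delta1 delta2 r (k + 1) (0, 0, 0) = 0"
    by (simp add: St_diff_def zero_prod_def)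
  ultimately show ?thesis
    unfolding boundaries_def by (metis image_eqI)
qed

end

theorem proposition2p10:
  fixes nC nR :: "int \<Rightarrow> nat"
    and d v delta1 delta2 r :: "int \<Rightarrow> ('a::comm_ring_1) vec \<Rightarrow> 'a vec"
  assumes "S_complex nC nR d v delta1 delta2 r"
  shows "\<forall>j. homology_iso
           (Sigma_carrier nC nR) (Sigma_diff d v delta1 delta2 r) Sigma_smult j
           (St_carrier nC nR) (St_diff d v delta1 delta2 r) St_smult (j - 2)"
proof
  fix j
  interpret S_complex_setting nC nR d v delta1 delta2 r
    using assms by unfold_locales
  let ?M = "Sigma_carrier nC nR" and ?D = "Sigma_diff d v delta1 delta2 r"
  let ?N = "St_carrier nC nR" and ?E = "St_diff d v delta1 delta2 r"
  show "homology_iso ?M ?D Sigma_smult j ?N ?E St_smult (j - 2)"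
  proof (rule homology_iso_of_section[where f = "Sigma_proj delta2 j" and g = Sigma_incl])
    show "Sigma_proj delta2 j ` cycles ?M ?D j \<subseteq> cycles ?N ?E (j - 2)"
      using chain_map_cycles[OF Sigma_proj_chain_map Sigma_proj_zero] by simp
    show "Sigma_proj delta2 j ` boundaries ?M ?D j \<subseteq> boundaries ?N ?E (j - 2)"
      using chain_map_boundaries[OF Sigma_proj_chain_map] by simp
    show "Sigma_incl ` cycles ?N ?E (j - 2) \<subseteq> cycles ?M ?D j"
      using chain_map_cycles[OF Sigma_incl_chain_map, of "j - 2"] by simp
    show "Sigma_incl ` boundaries ?N ?E (j - 2) \<subseteq> boundaries ?M ?D j"
      using chain_map_boundaries[OF Sigma_incl_chain_map, of "j - 2"] by simp
    show "\<forall>x\<in>cycles ?M ?D j. x - Sigma_incl (Sigma_proj delta2 j x) \<in> boundaries ?M ?D j"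
      by (intro ballI chain_homotopy_cycles[OF Sigma_homotopy_chain_homotopy Sigma_homotopy_zero])
    show "\<forall>x\<in>boundaries ?M ?D j. \<forall>y\<in>boundaries ?M ?D j. x + y \<in> boundaries ?M ?D j"
      using boundaries_add[where M = ?M and D = ?D, OF Sigma_carrier_add Sigma_diff_add] by blast
  qed (auto simp: cycles_def Sigma_proj_add Sigma_proj_smult zero_in_St_boundaries)
qed

end
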